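(* Let $G=(V,E)$ be a social network with seller $s$ and buyers $N$, and let the fair diffusion mechanism (FDM) be as defined in the context. Then FDM is individually rational: for every buyer $i\in N$, every true type profile $\theta$, and every feasible action profile $a\in\mathcal{F}(\theta)$ in which $i$ participates with $a_i=(v_i,r_i')$ (i.e. $i$ reports her true valuation $v_i$ and an arbitrary set $r_i'\subseteq r_i$ of invited neighbours), we have $u_i(\theta_i,a)=\pi_i(a)v_i-p_i(a)\ge 0$.
   Context: Model. A seller $s$ sells one item on an undirected graph $G=(V,E)$ with $V=N\cup\{s\}$, $N=\{1,\dots,n\}$ the buyers. Each buyer $i$ has neighbour set $r_i\subseteq V$ and private valuation $v_i\ge 0$; her type is $\theta_i=(v_i,r_i)$; the seller's valuation is $0$ and $r_s$ denotes the seller's neighbours. Each buyer reports an action $a_i=(v_i',r_i')$ with $v_i'\ge0$ the reported valuation and $r_i'\subseteq r_i$ the neighbours she invites, or $a_i=nil$ if she does not participate. A profile $a$ is feasible ($a\in\mathcal{F}(\theta)$) if every $i$ with $a_i\neq nil$ is reachable by a path $s,k_1,\dots,k_m,i$ with $k_1\in r_s$, $k_{t+1}\in r'_{k_t}$ and $i\in r'_{k_m}$. All graph notions below refer to this reported network (participating buyers, with $j$ reachable from $i$ when $j\in r_i'$, and from $s$ when $j\in r_s$); $d_i$ is the length of the shortest such path from $s$ to $i$. A mechanism gives an allocation $\pi_i(a)\in\{0,1\}$ (at most one winner) and payments $p_i(a)\in\mathbb{R}$ (negative means $i$ receives money); buyer utility is $u_i(\theta_i,a)=\pi_i(a)v_i-p_i(a)$,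 and the seller's revenue is $\sum_{i\in N}p_i(a)$. Definitions. A set $D\subseteq N$ is a cut set of buyer $i$ if no path from $s$ to $i$ exists without $D$; it is a minimal cut set if no proper subset is a cut set. $j$ is a critical ancestor of $i$ if $j$ belongs to a minimal cut set of $i$; a strong critical ancestor if $\{j\}$ is a minimal cut set of $i$; a weak critical ancestor if critical but not strong. $V_i=\{j\in N: i$ is a strong critical ancestor of $j\}$ (so $i\in V_i$); for $K\subseteq N$, $N_{-K}=N\setminus\bigcup_{i\in K}V_i$, and $N_{-i}=N_{-\{i\}}$. For $D\subseteq N$, $v_D^{1^{st}}=\max_{i\in D}v_i'$, and $g_D^{1^{st}}\in\arg\max_{i\in D}v^{1^{st}}_{V_i}$ (random tie-breaking). The strong critical ancestor sequence of $i$ is $C_i=(c_1^i,\dots,c_k^i)$, the strong critical ancestors of $i$ ordered by strictly increasing depth, with $c_k^i=i$. FDM. Let $h\in\arg\max_{i\in N}v_i'$ (random tie-breaking) and $C=(c_1,\dots,c_h)$ its strong critical ancestor sequence. For consecutive $c_j,c_{j+1}$, let $M_{c_jc_{j+1}}$ be the set of weak critical ancestors of $h$ lying on some simple path from $c_j$ to $c_{j+1}$ (for the last element the corresponding set $\{c_{j+1}\}\cup M_{c_jc_{j+1}}$ is empty). Allocation: the item goes to the first $c_j\in C$ (smallest $j$) with $v'_{c_j}=v^{1^{st}}_{N_{-(\{c_{j+1}\}\cup M_{c_jc_{j+1}})}}$; call it $c_w$, and let $\hat C=(c_1,\dots,c_w)$. Rewards: for $c_j\in\hat C$ (with $j\ge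 2$), $R_{c_j}=\big(v^{1^{st}}_{N_{-(\{c_j\}\cup \{g^{1^{st}}_{M_{c_{j-1}c_j}}\})}}-v^{1^{st}}_{N_{-(\{c_j\}\cup M_{c_{j-1}c_j})}}\big)/(|M_{c_{j-1}c_j}|+1)$; for $i\in M_{c_{j-1}c_j}$, $R_i=\big(v^{1^{st}}_{N_{-(\{i\}\cup\{c_j\})}}-v^{1^{st}}_{N_{-(\{c_j\}\cup M_{c_{j-1}c_j})}}\big)/(|M_{c_{j-1}c_j}|+1)$; otherwise $R_i=0$. Payments: $p_{c_j}=v^{1^{st}}_{N_{-c_j}}-v^{1^{st}}_{N_{-(\{c_{j+1}\}\cup M_{c_jc_{j+1}})}}-R_{c_j}$ for $c_j\in\hat C$, $j<w$; $p_{c_w}=v^{1^{st}}_{N_{-c_w}}-R_{c_w}$; $p_i=-R_i$ for $i\in M_{c_{j-1}c_j}$, $2\le j\le w$; $p_i=0$ otherwise. *)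

theory Defs
  imports Complex_Main
begin

text \<open>An action profile assigns to each buyer either None (nil, not participating) or
Some (v', r'): reported valuation v' and invited neighbour set r'.\<close>

type_synonym 'a profile = "'a \<Rightarrow> (real \<times> 'a set) option"

definition part :: "'a profile \<Rightarrow> 'a set" where
  "part a = {i. a i \<noteq> None}"

definition bid :: "'a profile \<Rightarrow> 'a \<Rightarrow> real" where
  "bid a i = (case a i of Some (v, _) \<Rightarrow> v | None \<Rightarrow> 0)"

definition invs :: "'a profile \<Rightarrow> 'a \<Rightarrow> 'a set" where
  "invs a i = (case a i of Some (_, r) \<Rightarrow> r | None \<Rightarrow> {})"

definition redge :: "'a \<Rightarrow> 'a set \<Rightarrow> 'a profile \<Rightarrow> ('a \<times> 'a) set" where
  "redge s rs a = {(x, y). y \<in> part a \<and> ((x = s \<and> y \<in> rs) \<or> (x \<in> part a \<and> y \<in> invs a x))}"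

text \<open>Feasible action profiles F(theta) (r = true neighbour sets of buyers).\<close>
definition feasible :: "'a set \<Rightarrow> 'a \<Rightarrow> 'a set \<Rightarrow> ('a \<Rightarrow> 'a set) \<Rightarrow> 'a profile \<Rightarrow> bool" where
  "feasible N s rs r a \<longleftrightarrow>
     (\<forall>i. a i \<noteq> None \<longrightarrow> i \<in> N) \<and>
     (\<forall>i v' r'. a i = Some (v', r') \<longrightarrow> v' \<ge> 0 \<and> r' \<subseteq> r i) \<and>
     (\<forall>i \<in> part a. (s, i) \<in> (redge s rs a)\<^sup>+)"

text \<open>D is a cut set of i: every path from s to i (i included) meets D.\<close>
definition cutset :: "'a \<Rightarrow> 'a set \<Rightarrow> 'a profile \<Rightarrow> 'a set \<Rightarrow> 'a \<Rightarrow> bool" where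
  "cutset s rs a D i \<longleftrightarrow> D \<subseteq> part a \<and>
     (s, i) \<notin> (redge s rs a \<inter> {(x, y). x \<notin> D \<and> y \<notin> D})\<^sup>*"

definition min_cutset :: "'a \<Rightarrow> 'a set \<Rightarrow> 'a profile \<Rightarrow> 'a set \<Rightarrow> 'a \<Rightarrow> bool" where
  "min_cutset s rs a D i \<longleftrightarrow> cutset s rs a D i \<and> (\<forall>D'. D' \<subset> D \<longrightarrow> \<not> cutset s rs a D' i)"

definition critical :: "'a \<Rightarrow> 'a set \<Rightarrow> 'a profile \<Rightarrow> 'a \<Rightarrow> 'a \<Rightarrow> bool" where
  "critical s rs a j i \<longleftrightarrow> (\<exists>D. min_cutset s rs a D i \<and> j \<in> D)"

definition strong :: "'a \<Rightarrow> 'a set \<Rightarrow> 'a profile \<Rightarrow> 'a \<Rightarrow> 'a \<Rightarrow> bool" where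
  "strong s rs a j i \<longleftrightarrow> min_cutset s rs a {j} i"

definition weak :: "'a \<Rightarrow> 'a set \<Rightarrow> 'a profile \<Rightarrow> 'a \<Rightarrow> 'a \<Rightarrow> bool" where
  "weak s rs a j i \<longleftrightarrow> critical s rs a j i \<and> \<not> strong s rs a j i"

definition Vset :: "'a \<Rightarrow> 'a set \<Rightarrow> 'a profile \<Rightarrow> 'a \<Rightarrow> 'a set" where
  "Vset s rs a i = {j \<in> part a. strong s rs a i j}"

definition Nminus :: "'a \<Rightarrow> 'a set \<Rightarrow> 'a profile \<Rightarrow> 'a set \<Rightarrow> 'a set" where
  "Nminus s rs a K = part a - (\<Union>i\<in>K. Vset s rs a i)"

text \<open>Highest reported valuation in D (0 for the empty set: seller's valuation).\<close>
definition vfirst :: "'a profile \<Rightarrow> 'a set \<Rightarrow> real" where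
  "vfirst a D = Max (insert 0 (bid a ` D))"

definition depth :: "'a \<Rightarrow> 'a set \<Rightarrow> 'a profile \<Rightarrow> 'a \<Rightarrow> nat" where
  "depth s rs a i = (LEAST n. (s, i) \<in> (redge s rs a) ^^ n)"

definition sca_seq :: "'a \<Rightarrow> 'a set \<Rightarrow> 'a profile \<Rightarrow> 'a \<Rightarrow> 'a list" where
  "sca_seq s rs a h = (SOME xs. distinct xs \<and> set xs = {j. strong s rs a j h} \<and>
      sorted_wrt (\<lambda>x y. depth s rs a x < depth s rs a y) xs)"

definition spath :: "'a \<Rightarrow> 'a set \<Rightarrow> 'a profile \<Rightarrow> 'a list \<Rightarrow> bool" where
  "spath s rs a xs \<longleftrightarrow> xs \<noteq> [] \<and> distinct xs \<and>
     (\<forall>k. Suc k < length xs \<longrightarrow> (xs ! k, xs ! Suc k) \<in> redge s rs a)"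

definition Mset :: "'a \<Rightarrow> 'a set \<Rightarrow> 'a profile \<Rightarrow> 'a \<Rightarrow> 'a \<Rightarrow> 'a \<Rightarrow> 'a set" where
  "Mset s rs a h x y = {k. weak s rs a k h \<and>
     (\<exists>xs. spath s rs a xs \<and> hd xs = x \<and> last xs = y \<and> k \<in> set xs)}"

text \<open>FDM, for a given realisation of the random tie-breaking: h is the chosen highest
bidder and gsel the chosen element of argmax_{i in D} vfirst(V_i). Indices of the
sequence C are 0-based here.\<close>

definition Kset :: "'a \<Rightarrow> 'a set \<Rightarrow> 'a profile \<Rightarrow> 'a \<Rightarrow> nat \<Rightarrow> 'a set" where
  "Kset s rs a h j = (let C = sca_seq s rs a h in
     if Suc j < length C then insert (C ! Suc j) (Mset s rs a h (C ! j) (C ! Suc j)) else {})"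

definition fdm_win :: "'a \<Rightarrow> 'a set \<Rightarrow> 'a profile \<Rightarrow> 'a \<Rightarrow> nat" where
  "fdm_win s rs a h = (let C = sca_seq s rs a h in
     LEAST j. j < length C \<and> bid a (C ! j) = vfirst a (Nminus s rs a (Kset s rs a h j)))"

definition Mj :: "'a \<Rightarrow> 'a set \<Rightarrow> 'a profile \<Rightarrow> 'a \<Rightarrow> nat \<Rightarrow> 'a set" where
  "Mj s rs a h j = (let C = sca_seq s rs a h in Mset s rs a h (C ! (j - 1)) (C ! j))"

definition Rc :: "'a \<Rightarrow> 'a set \<Rightarrow> 'a profile \<Rightarrow> 'a \<Rightarrow> ('a set \<Rightarrow> 'a) \<Rightarrow> nat \<Rightarrow> real" where
  "Rc s rs a h gsel j = (let C = sca_seq s rs a h; M = Mj s rs a h j;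
       G = (if M = {} then {} else {gsel M}) in
     if j = 0 then 0 else
       (vfirst a (Nminus s rs a (insert (C ! j) G))
        - vfirst a (Nminus s rs a (insert (C ! j) M))) / (real (card M) + 1))"

definition Rm :: "'a \<Rightarrow> 'a set \<Rightarrow> 'a profile \<Rightarrow> 'a \<Rightarrow> nat \<Rightarrow> 'a \<Rightarrow> real" where
  "Rm s rs a h j i = (let C = sca_seq s rs a h; M = Mj s rs a h j in
       (vfirst a (Nminus s rs a {i, C ! j})
        - vfirst a (Nminus s rs a (insert (C ! j) M))) / (real (card M) + 1))"

definition fdm_alloc :: "'a \<Rightarrow> 'a set \<Rightarrow> 'a profile \<Rightarrow> 'a \<Rightarrow> 'a \<Rightarrow> real" where
  "fdm_alloc s rs a h i = (if i = sca_seq s rs a h ! fdm_win s rs a h then 1 else 0)"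

definition fdm_pay :: "'a \<Rightarrow> 'a set \<Rightarrow> 'a profile \<Rightarrow> 'a \<Rightarrow> ('a set \<Rightarrow> 'a) \<Rightarrow> 'a \<Rightarrow> real" where
  "fdm_pay s rs a h gsel i = (let C = sca_seq s rs a h; w = fdm_win s rs a h in
     if \<exists>j\<le>w. C ! j = i then
       (let j = (LEAST j. j \<le> w \<and> C ! j = i) in
         if j < w then vfirst a (Nminus s rs a {i}) - vfirst a (Nminus s rs a (Kset s rs a h j))
                        - Rc s rs a h gsel j
         else vfirst a (Nminus s rs a {i}) - Rc s rs a h gsel j)
     else if \<exists>j. 1 \<le> j \<and> j \<le> w \<and> i \<in> Mj s rs a h j then
       - Rm s rs a h (LEAST j. 1 \<le> j \<and> j \<le> w \<and> i \<in> Mj s rs a h j) i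
     else 0)"

definition valid_h :: "'a profile \<Rightarrow> 'a \<Rightarrow> bool" where
  "valid_h a h \<longleftrightarrow> h \<in> part a \<and> (\<forall>j \<in> part a. bid a j \<le> bid a h)"

definition valid_gsel :: "'a \<Rightarrow> 'a set \<Rightarrow> 'a profile \<Rightarrow> ('a set \<Rightarrow> 'a) \<Rightarrow> bool" where
  "valid_gsel s rs a gsel \<longleftrightarrow> (\<forall>D. D \<noteq> {} \<and> D \<subseteq> part a \<longrightarrow> gsel D \<in> D \<and>
     (\<forall>x \<in> D. vfirst a (Vset s rs a x) \<le> vfirst a (Vset s rs a (gsel D))))"

end

theory Submission
  imports Defs
begin

text \<open>Strong critical ancestors are dominators in the flow-graph sense: c is one for x iff
every path from the seller to x passes through c. Dominance is transitive, and the dominators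
of a node are linearly ordered with strictly increasing depth. So the sequence C of the
highest bidder is a chain in which each c_j dominates c_{j+1} and, through the simple paths
from c_j to c_{j+1}, every buyer of M_{c_j c_{j+1}}. Removing c_j therefore removes every
buyer removed together with K_j = {c_{j+1}} \<union> M_{c_j c_{j+1}}, whence the highest bid in
N_{-c_j} is at most the one in N_{-K_j}. This makes the payment of every c_j before the winner
nonpositive, and the winner, whose bid is the highest one in N_{-K_w}, pays at most her bid.
All rewards are nonnegative since the highest bid can only drop when more buyers are removed,
and every other buyer pays nothing or receives a reward.\<close>

abbreviation avoiding :: "('a \<times> 'a) set \<Rightarrow> 'a set \<Rightarrow> ('a \<times> 'a) set" where
  "avoiding R D \<equiv> R \<inter> {(x, y). x \<notin> D \<and> y \<notin> D}"

definition dominates :: "('a \<times> 'a) set \<Rightarrow> 'a \<Rightarrow> 'a \<Rightarrow> 'a \<Rightarrow> bool" where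
  "dominates R s c x \<longleftrightarrow> (s, x) \<notin> (avoiding R {c})\<^sup>*"

lemma rtrancl_avoiding_target_eq:
  "(u, w) \<in> (avoiding R D)\<^sup>* \<Longrightarrow> w \<in> D \<Longrightarrow> u = w"
  by (cases rule: rtranclE) auto

lemma rtrancl_avoiding_insert:
  assumes "(x, y) \<in> (avoiding R D)\<^sup>*"
  shows "(x, y) \<in> (avoiding R (insert c D))\<^sup>* \<or> (x, c) \<in> (avoiding R D)\<^sup>*"
  using assms
proof (induction rule: rtrancl_induct)
  case (step y z)
  then show ?case
    by (cases "z = c") (auto intro: rtrancl_into_rtrancl)
qed simp

text \<open>Split a path from s to h at its last visit to x or y.\<close>

lemma rtrancl_avoiding_last_of_two:
  assumes "(s, h) \<in> R\<^sup>*" "x \<noteq> y"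
  shows "(s, h) \<in> (avoiding R {x, y})\<^sup>* \<or> (x, h) \<in> (avoiding R {y})\<^sup>* \<or>
    (y, h) \<in> (avoiding R {x})\<^sup>*"
  using assms(1)
proof (induction rule: rtrancl_induct)
  case (step u z)
  show ?case
  proof (cases "z = x \<or> z = y")
    case False
    from step.IH show ?thesis
    proof (elim disjE)
      assume p: "(s, u) \<in> (avoiding R {x, y})\<^sup>*"
      consider "u = x" | "u = y" | "u \<noteq> x" "u \<noteq> y" by blast
      then show ?thesis
      proof cases
        case 1
        then have "(x, z) \<in> avoiding R {y}" using step.hyps(2) False assms(2) by simp
        then show ?thesis by (simp add: r_into_rtrancl)
      next
        case 2
        then have "(y, z) \<in> avoiding R {x}" using step.hyps(2) False assms(2) by simp
        then show ?thesis by (simp add: r_into_rtrancl)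
      next
        case 3
        then have "(u, z) \<in> avoiding R {x, y}" using step.hyps(2) False by simp
        with p show ?thesis by (simp add: rtrancl_into_rtrancl)
      qed
    next
      assume p: "(x, u) \<in> (avoiding R {y})\<^sup>*"
      then have "u \<noteq> y" using rtrancl_avoiding_target_eq[OF p] assms(2) by blast
      then have "(u, z) \<in> avoiding R {y}" using step.hyps(2) False by simp
      with p show ?thesis by (simp add: rtrancl_into_rtrancl)
    next
      assume p: "(y, u) \<in> (avoiding R {x})\<^sup>*"
      then have "u \<noteq> x" using rtrancl_avoiding_target_eq[OF p] assms(2) by blast
      then have "(u, z) \<in> avoiding R {x}" using step.hyps(2) False by simp
      with p show ?thesis by (simp add: rtrancl_into_rtrancl)
    qed
  qed auto
qed simp

lemma rtrancl_avoiding_path_to_last: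
  assumes "successively (\<lambda>x y. (x, y) \<in> R) xs" "c \<notin> set xs" "k \<in> set xs"
  shows "(k, last xs) \<in> (avoiding R {c})\<^sup>*"
  using assms
proof (induction xs arbitrary: k)
  case (Cons x xs)
  show ?case
  proof (cases "xs = []")
    case False
    have path: "successively (\<lambda>x y. (x, y) \<in> R) xs" "c \<notin> set xs"
      and edge: "(x, hd xs) \<in> avoiding R {c}"
      using Cons.prems False by (auto simp: successively_Cons)
    have "(hd xs, last xs) \<in> (avoiding R {c})\<^sup>*"
      using Cons.IH[OF path] False by simp
    with edge have "(x, last xs) \<in> (avoiding R {c})\<^sup>*"
      by (rule converse_rtrancl_into_rtrancl)
    then show ?thesis using Cons.IH[OF path] Cons.prems(3) False by auto
  qed (use Cons.prems in simp)
qed simp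

lemma dominates_refl: "c \<noteq> s \<Longrightarrow> dominates R s c c"
  unfolding dominates_def using rtrancl_avoiding_target_eq[of s c R "{c}"] by blast

lemma not_dominates_root: "\<not> dominates R s c s"
  by (simp add: dominates_def)

lemma dominates_trans:
  assumes "dominates R s c k" "dominates R s k m"
  shows "dominates R s c m"
  unfolding dominates_def
proof
  assume "(s, m) \<in> (avoiding R {c})\<^sup>*"
  then consider "(s, m) \<in> (avoiding R {k, c})\<^sup>*" | "(s, k) \<in> (avoiding R {c})\<^sup>*"
    using rtrancl_avoiding_insert[of s m R "{c}" k] by blast
  then show False
  proof cases
    case 1
    have "avoiding R {k, c} \<subseteq> avoiding R {k}" by auto
    with 1 have "(s, m) \<in> (avoiding R {k})\<^sup>*" using rtrancl_mono by blast
    with assms(2) show False by (simp add: dominates_def)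
  next
    case 2
    with assms(1) show False by (simp add: dominates_def)
  qed
qed

lemma dominates_if_rtrancl_avoiding:
  "dominates R s c y \<Longrightarrow> (x, y) \<in> (avoiding R {c})\<^sup>* \<Longrightarrow> dominates R s c x"
  unfolding dominates_def by (metis rtrancl_trans)

lemma dominates_linear:
  assumes "(s, h) \<in> R\<^sup>*" "dominates R s c h" "dominates R s d h" "c \<noteq> d"
  shows "dominates R s c d \<or> dominates R s d c"
proof (rule ccontr)
  assume "\<not> ?thesis"
  then have cd: "(s, d) \<in> (avoiding R {c})\<^sup>*" and dc: "(s, c) \<in> (avoiding R {d})\<^sup>*"
    unfolding dominates_def by blast+
  from rtrancl_avoiding_last_of_two[OF assms(1,4)] show False
  proof (elim disjE)
    assume "(s, h) \<in> (avoiding R {c, d})\<^sup>*"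
    moreover have "avoiding R {c, d} \<subseteq> avoiding R {c}" by auto
    ultimately have "(s, h) \<in> (avoiding R {c})\<^sup>*" using rtrancl_mono by blast
    with assms(2) show False by (simp add: dominates_def)
  next
    assume "(c, h) \<in> (avoiding R {d})\<^sup>*"
    with dc have "(s, h) \<in> (avoiding R {d})\<^sup>*" by (rule rtrancl_trans)
    with assms(3) show False by (simp add: dominates_def)
  next
    assume "(d, h) \<in> (avoiding R {c})\<^sup>*"
    with cd have "(s, h) \<in> (avoiding R {c})\<^sup>*" by (rule rtrancl_trans)
    with assms(2) show False by (simp add: dominates_def)
  qed
qed

lemma dominates_relpow_earlier:
  assumes "dominates R s c x" "c \<noteq> x" "(s, x) \<in> R ^^ n"
  shows "\<exists>m<n. (s, c) \<in> R ^^ m"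
  using assms
proof (induction n arbitrary: x)
  case 0
  then show ?case by (simp add: not_dominates_root)
next
  case (Suc n)
  from Suc.prems(3) obtain z where z: "(s, z) \<in> R ^^ n" "(z, x) \<in> R" by (rule relpow_Suc_E)
  show ?case
  proof (cases "c = z")
    case True
    with z(1) show ?thesis by blast
  next
    case False
    have dom: "dominates R s c z"
      unfolding dominates_def
    proof
      assume "(s, z) \<in> (avoiding R {c})\<^sup>*"
      moreover have "(z, x) \<in> avoiding R {c}" using z(2) False Suc.prems(2) by simp
      ultimately have "(s, x) \<in> (avoiding R {c})\<^sup>*" by (rule rtrancl_into_rtrancl)
      with Suc.prems(1) show False by (simp add: dominates_def)
    qed
    obtain m where "m < n" "(s, c) \<in> R ^^ m" using Suc.IH[OF dom False z(1)] by blast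
    then show ?thesis by (intro exI[of _ m]) simp
  qed
qed

lemma dominates_least_relpow_less:
  assumes "dominates R s c x" "c \<noteq> x" "(s, x) \<in> R\<^sup>*"
  shows "(LEAST n. (s, c) \<in> R ^^ n) < (LEAST n. (s, x) \<in> R ^^ n)"
proof -
  from assms(3) have "\<exists>n. (s, x) \<in> R ^^ n" by (simp add: rtrancl_power)
  then have "(s, x) \<in> R ^^ (LEAST n. (s, x) \<in> R ^^ n)" by (rule LeastI_ex)
  then obtain m where "m < (LEAST n. (s, x) \<in> R ^^ n)" "(s, c) \<in> R ^^ m"
    using dominates_relpow_earlier[OF assms(1,2)] by blast
  moreover have "(LEAST n. (s, c) \<in> R ^^ n) \<le> m" using \<open>(s, c) \<in> R ^^ m\<close> by (rule Least_le)
  ultimately show ?thesis by simp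
qed

lemma rtrancl_redge_from_seller:
  "(s, m) \<in> (redge s rs a)\<^sup>* \<Longrightarrow> m = s \<or> m \<in> part a"
  by (erule rtranclE) (auto simp: redge_def)

lemma cutset_singleton_iff:
  "cutset s rs a {c} m \<longleftrightarrow> c \<in> part a \<and> dominates (redge s rs a) s c m"
  by (simp add: cutset_def dominates_def)

lemma spath_reaches_last_avoiding_hd:
  assumes "spath s rs a xs" "k \<in> set xs" "k \<noteq> hd xs"
  shows "(k, last xs) \<in> (avoiding (redge s rs a) {hd xs})\<^sup>*"
proof -
  obtain c ys where xs: "xs = c # ys" using assms(1) by (cases xs) (auto simp: spath_def)
  have "successively (\<lambda>x y. (x, y) \<in> redge s rs a) xs" "distinct xs"
    using assms(1) by (auto simp: spath_def successively_conv_nth)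
  then have "successively (\<lambda>x y. (x, y) \<in> redge s rs a) ys" "c \<notin> set ys"
    using xs by (auto simp: successively_Cons)
  moreover have "k \<in> set ys" using assms(2,3) xs by simp
  ultimately have "(k, last ys) \<in> (avoiding (redge s rs a) {c})\<^sup>*"
    by (rule rtrancl_avoiding_path_to_last)
  moreover have "last xs = last ys" using xs \<open>k \<in> set ys\<close> by auto
  ultimately show ?thesis using xs by simp
qed

lemma weak_in_part: "weak s rs a k h \<Longrightarrow> k \<in> part a"
  unfolding weak_def critical_def min_cutset_def cutset_def by auto

lemma vfirst_mono: "finite B \<Longrightarrow> A \<subseteq> B \<Longrightarrow> vfirst a A \<le> vfirst a B"
  unfolding vfirst_def by (rule Max_mono) auto

lemma Mj_subset_part: "Mj s rs a h j \<subseteq> part a"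
  unfolding Mj_def Mset_def Let_def by (auto dest: weak_in_part)

lemma sorted_list_by_inj_key:
  fixes f :: "'a \<Rightarrow> 'b :: linorder"
  assumes "finite S" "inj_on f S"
  shows "\<exists>xs. distinct xs \<and> set xs = S \<and> sorted_wrt (\<lambda>x y. f x < f y) xs"
proof -
  obtain xs where xs: "set xs = S" "distinct xs" using finite_distinct_list[OF assms(1)] by blast
  let ?ys = "sort_key f xs"
  have "distinct (map f ?ys)" using xs assms(2) by (simp add: distinct_map)
  then have "sorted_wrt (<) (map f ?ys)" by (simp add: strict_sorted_iff)
  then show ?thesis using xs by (intro exI[of _ ?ys]) (simp add: sorted_wrt_map)
qed

locale reported_network =
  fixes s :: 'a and rs :: "'a set" and a :: "'a profile"
  assumes reachable: "\<forall>i \<in> part a. (s, i) \<in> (redge s rs a)\<^sup>+"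
    and seller_notin_part: "s \<notin> part a"
    and finite_part: "finite (part a)"
begin

lemma rtrancl_redge_if_part: "m \<in> part a \<Longrightarrow> (s, m) \<in> (redge s rs a)\<^sup>*"
  using reachable by (simp add: trancl_into_rtrancl)

lemma cutset_empty_iff: "cutset s rs a {} m \<longleftrightarrow> m \<noteq> s \<and> m \<notin> part a"
proof -
  have "redge s rs a \<inter> {(x, y). x \<notin> {} \<and> y \<notin> {}} = redge s rs a" by simp
  then have "cutset s rs a {} m \<longleftrightarrow> (s, m) \<notin> (redge s rs a)\<^sup>*"
    unfolding cutset_def by (simp only: empty_subsetI simp_thms)
  also have "\<dots> \<longleftrightarrow> m \<noteq> s \<and> m \<notin> part a"
  proof
    assume unreachable: "(s, m) \<notin> (redge s rs a)\<^sup>*"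
    then have "m \<noteq> s" by auto
    moreover have "m \<notin> part a" using unreachable rtrancl_redge_if_part by blast
    ultimately show "m \<noteq> s \<and> m \<notin> part a" ..
  next
    assume "m \<noteq> s \<and> m \<notin> part a"
    then show "(s, m) \<notin> (redge s rs a)\<^sup>*" by (metis rtrancl_redge_from_seller)
  qed
  finally show ?thesis .
qed

lemma strong_iff_dominates:
  "strong s rs a c m \<longleftrightarrow> c \<in> part a \<and> m \<in> part a \<and> dominates (redge s rs a) s c m"
proof -
  have proper_subsets: "D \<subset> {c} \<longleftrightarrow> D = {}" for D :: "'a set"
    by (auto simp: psubset_eq subset_singleton_iff)
  have "strong s rs a c m \<longleftrightarrow> cutset s rs a {c} m \<and> \<not> cutset s rs a {} m"
    by (simp add: strong_def min_cutset_def proper_subsets)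
  then show ?thesis
    unfolding cutset_singleton_iff cutset_empty_iff by (auto simp: not_dominates_root)
qed

lemma strong_refl:
  assumes "h \<in> part a"
  shows "strong s rs a h h"
proof -
  have "h \<noteq> s" using assms seller_notin_part by blast
  with assms show ?thesis by (simp add: strong_iff_dominates dominates_refl)
qed

lemma strong_trans: "strong s rs a c k \<Longrightarrow> strong s rs a k m \<Longrightarrow> strong s rs a c m"
  unfolding strong_iff_dominates by (meson dominates_trans)

lemma strong_linear:
  assumes "strong s rs a x h" "strong s rs a y h" "x \<noteq> y"
  shows "strong s rs a x y \<or> strong s rs a y x"
proof -
  have parts: "x \<in> part a" "y \<in> part a" "h \<in> part a"
    and dominators: "dominates (redge s rs a) s x h" "dominates (redge s rs a) s y h"
    using assms(1,2) by (simp_all add: strong_iff_dominates)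
  from dominates_linear[OF rtrancl_redge_if_part[OF parts(3)] dominators assms(3)]
  show ?thesis using parts by (simp add: strong_iff_dominates)
qed

lemma depth_less_if_strong:
  assumes "strong s rs a y x" "y \<noteq> x"
  shows "depth s rs a y < depth s rs a x"
proof -
  have "x \<in> part a" and "dominates (redge s rs a) s y x"
    using assms(1) by (simp_all add: strong_iff_dominates)
  with assms(2) show ?thesis
    unfolding depth_def by (intro dominates_least_relpow_less rtrancl_redge_if_part)
qed

lemma sca_seq_spec:
  "distinct (sca_seq s rs a h) \<and> set (sca_seq s rs a h) = {j. strong s rs a j h} \<and>
     sorted_wrt (\<lambda>x y. depth s rs a x < depth s rs a y) (sca_seq s rs a h)"
proof -
  have "finite {j. strong s rs a j h}"
    using finite_part by (rule finite_subset[rotated]) (auto simp: strong_iff_dominates)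
  moreover have "inj_on (depth s rs a) {j. strong s rs a j h}"
  proof (rule inj_onI, rule ccontr)
    fix x y
    assume "x \<in> {j. strong s rs a j h}" "y \<in> {j. strong s rs a j h}" "x \<noteq> y"
      and same_depth: "depth s rs a x = depth s rs a y"
    then consider "strong s rs a x y" | "strong s rs a y x" using strong_linear by blast
    then show False
    proof cases
      case 1
      from 1 \<open>x \<noteq> y\<close> have "depth s rs a x < depth s rs a y" by (rule depth_less_if_strong)
      with same_depth show False by simp
    next
      case 2
      from 2 \<open>x \<noteq> y\<close> have "depth s rs a y < depth s rs a x" by (intro depth_less_if_strong) auto
      with same_depth show False by simp
    qed
  qed
  ultimately show ?thesis
    unfolding sca_seq_def by (rule someI_ex[OF sorted_list_by_inj_key])
qed

lemma sca_seq_strong_Suc: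
  assumes "Suc j < length (sca_seq s rs a h)"
  shows "strong s rs a (sca_seq s rs a h ! j) (sca_seq s rs a h ! Suc j)"
proof -
  let ?C = "sca_seq s rs a h"
  have spec: "distinct ?C" "set ?C = {j. strong s rs a j h}"
    "sorted_wrt (\<lambda>x y. depth s rs a x < depth s rs a y) ?C"
    using sca_seq_spec by simp_all
  have "?C ! j \<in> set ?C" "?C ! Suc j \<in> set ?C" using assms by simp_all
  then have ancestors: "strong s rs a (?C ! j) h" "strong s rs a (?C ! Suc j) h"
    using spec(2) by simp_all
  have different: "?C ! j \<noteq> ?C ! Suc j" using spec(1) assms by (simp add: nth_eq_iff_index_eq)
  have deeper: "depth s rs a (?C ! j) < depth s rs a (?C ! Suc j)"
    using spec(3) assms by (simp add: sorted_wrt_iff_nth_less)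
  from strong_linear[OF ancestors different] show ?thesis
    using depth_less_if_strong[of "?C ! Suc j" "?C ! j"] different deeper by auto
qed

lemma sca_seq_ends_with:
  assumes "h \<in> part a"
  obtains j where "Suc j = length (sca_seq s rs a h)" "sca_seq s rs a h ! j = h"
proof -
  let ?C = "sca_seq s rs a h"
  have spec: "set ?C = {j. strong s rs a j h}"
    "sorted_wrt (\<lambda>x y. depth s rs a x < depth s rs a y) ?C"
    using sca_seq_spec by simp_all
  have "h \<in> set ?C" using spec(1) strong_refl[OF assms] by simp
  then obtain j where j: "j < length ?C" "?C ! j = h" by (auto simp: in_set_conv_nth)
  have "\<not> Suc j < length ?C"
  proof
    assume not_last: "Suc j < length ?C"
    then have "depth s rs a h < depth s rs a (?C ! Suc j)"
      using spec(2) j(2) by (metis lessI sorted_wrt_iff_nth_less)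
    moreover have "?C ! Suc j \<in> set ?C" using not_last by simp
    then have "strong s rs a (?C ! Suc j) h" using spec(1) by simp
    ultimately show False
      using depth_less_if_strong[of "?C ! Suc j" h] by (metis less_asym less_irrefl)
  qed
  with j(1) have "Suc j = length ?C" by simp
  then show thesis using j(2) by (rule that)
qed

lemma fdm_win_spec:
  assumes "valid_h a h" "0 \<le> bid a h"
  shows "fdm_win s rs a h < length (sca_seq s rs a h) \<and>
    bid a (sca_seq s rs a h ! fdm_win s rs a h)
      = vfirst a (Nminus s rs a (Kset s rs a h (fdm_win s rs a h)))"
proof -
  let ?C = "sca_seq s rs a h"
  have h: "h \<in> part a" "\<forall>j \<in> part a. bid a j \<le> bid a h"
    using assms(1) by (simp_all add: valid_h_def)
  obtain j where j: "Suc j = length ?C" "?C ! j = h" using sca_seq_ends_with[OF h(1)] .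
  have "Kset s rs a h j = {}" using j(1) by (simp add: Kset_def)
  moreover have "vfirst a (part a) = bid a h"
    unfolding vfirst_def by (rule Max_eqI) (use finite_part h assms(2) in auto)
  ultimately have "j < length ?C \<and> bid a (?C ! j) = vfirst a (Nminus s rs a (Kset s rs a h j))"
    using j by (simp add: Nminus_def)
  then show ?thesis unfolding fdm_win_def Let_def by (rule LeastI)
qed

lemma strong_if_in_Kset:
  assumes "k \<in> Kset s rs a h j"
  shows "strong s rs a (sca_seq s rs a h ! j) k"
proof -
  let ?C = "sca_seq s rs a h"
  let ?c = "?C ! j" and ?c' = "?C ! Suc j"
  have not_last: "Suc j < length ?C" and "k = ?c' \<or> k \<in> Mset s rs a h ?c ?c'"
    using assms by (auto simp: Kset_def Let_def split: if_splits)
  have "strong s rs a ?c ?c'" using not_last by (rule sca_seq_strong_Suc)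
  from \<open>k = ?c' \<or> k \<in> Mset s rs a h ?c ?c'\<close> show ?thesis
  proof
    assume "k \<in> Mset s rs a h ?c ?c'"
    then obtain xs where weak: "weak s rs a k h"
      and xs: "spath s rs a xs" "hd xs = ?c" "last xs = ?c'" "k \<in> set xs"
      unfolding Mset_def by blast
    have "?c \<in> set ?C" using not_last by simp
    then have "strong s rs a ?c h" using sca_seq_spec by simp
    with weak have "k \<noteq> ?c" by (auto simp: weak_def)
    with xs have "(k, ?c') \<in> (avoiding (redge s rs a) {?c})\<^sup>*"
      using spath_reaches_last_avoiding_hd[OF xs(1,4)] by simp
    moreover have "dominates (redge s rs a) s ?c ?c'" and "?c \<in> part a"
      using \<open>strong s rs a ?c ?c'\<close> by (simp_all add: strong_iff_dominates)
    ultimately have "dominates (redge s rs a) s ?c k"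
      using dominates_if_rtrancl_avoiding by metis
    with \<open>?c \<in> part a\<close> weak_in_part[OF weak] show ?thesis by (simp add: strong_iff_dominates)
  qed (use \<open>strong s rs a ?c ?c'\<close> in simp)
qed

lemma Nminus_sca_seq_subset_Kset:
  "Nminus s rs a {sca_seq s rs a h ! j} \<subseteq> Nminus s rs a (Kset s rs a h j)"
proof -
  have "Vset s rs a k \<subseteq> Vset s rs a (sca_seq s rs a h ! j)" if "k \<in> Kset s rs a h j" for k
    using strong_trans[OF strong_if_in_Kset[OF that]] by (auto simp: Vset_def)
  then show ?thesis by (auto simp: Nminus_def)
qed

lemma vfirst_Nminus_antimono:
  "K \<subseteq> K' \<Longrightarrow> vfirst a (Nminus s rs a K') \<le> vfirst a (Nminus s rs a K)"
  by (rule vfirst_mono[OF finite_subset]) (auto simp: Nminus_def finite_part)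

lemma Rc_nonneg:
  assumes "valid_gsel s rs a gsel"
  shows "0 \<le> Rc s rs a h gsel j"
proof -
  define M where "M = Mj s rs a h j"
  define G where "G = (if M = {} then {} else {gsel M})"
  have "M \<noteq> {} \<Longrightarrow> gsel M \<in> M"
    using assms Mj_subset_part[of s rs a h j] unfolding valid_gsel_def M_def by blast
  then have "G \<subseteq> M" by (simp add: G_def)
  then have "vfirst a (Nminus s rs a (insert (sca_seq s rs a h ! j) M))
      \<le> vfirst a (Nminus s rs a (insert (sca_seq s rs a h ! j) G))"
    by (intro vfirst_Nminus_antimono) auto
  then show ?thesis unfolding Rc_def Let_def M_def[symmetric] G_def[symmetric] by simp
qed

lemma Rm_nonneg:
  assumes "i \<in> Mj s rs a h j"
  shows "0 \<le> Rm s rs a h j i"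
proof -
  have "vfirst a (Nminus s rs a (insert (sca_seq s rs a h ! j) (Mj s rs a h j)))
      \<le> vfirst a (Nminus s rs a {i, sca_seq s rs a h ! j})"
    using assms by (intro vfirst_Nminus_antimono) auto
  then show ?thesis unfolding Rm_def Let_def by simp
qed

lemma fdm_pay_nonpos_off_sequence:
  assumes "\<not> (\<exists>j \<le> fdm_win s rs a h. sca_seq s rs a h ! j = i)"
  shows "fdm_pay s rs a h gsel i \<le> 0"
proof -
  define w where "w = fdm_win s rs a h"
  have not_ancestor: "\<not> (\<exists>j \<le> w. sca_seq s rs a h ! j = i)" using assms by (simp add: w_def)
  show ?thesis
  proof (cases "\<exists>j. 1 \<le> j \<and> j \<le> w \<and> i \<in> Mj s rs a h j")
    case True
    define j where "j = (LEAST j. 1 \<le> j \<and> j \<le> w \<and> i \<in> Mj s rs a h j)"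
    have "i \<in> Mj s rs a h j" using LeastI_ex[OF True] by (simp add: j_def)
    moreover have "fdm_pay s rs a h gsel i = - Rm s rs a h j i"
      unfolding fdm_pay_def Let_def w_def[symmetric]
      by (simp only: if_not_P[OF not_ancestor] if_P[OF True] j_def)
    ultimately show ?thesis using Rm_nonneg by simp
  next
    case False
    then show ?thesis
      unfolding fdm_pay_def Let_def w_def[symmetric]
      by (simp only: if_not_P[OF not_ancestor] if_not_P[OF False] if_False order_refl)
  qed
qed

lemma fdm_utility_nonneg_on_sequence:
  assumes h: "valid_h a h" "0 \<le> bid a h" and gsel: "valid_gsel s rs a gsel"
    and bid: "0 \<le> bid a i" and on_sequence: "\<exists>j \<le> fdm_win s rs a h. sca_seq s rs a h ! j = i"
  shows "0 \<le> fdm_alloc s rs a h i * bid a i - fdm_pay s rs a h gsel i"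
proof -
  define C where "C = sca_seq s rs a h"
  define w where "w = fdm_win s rs a h"
  define j where "j = (LEAST j. j \<le> w \<and> C ! j = i)"
  have j: "j \<le> w" "C ! j = i" using LeastI_ex[OF on_sequence] by (simp_all add: j_def C_def w_def)
  have pay: "fdm_pay s rs a h gsel i = vfirst a (Nminus s rs a {i})
      - (if j < w then vfirst a (Nminus s rs a (Kset s rs a h j)) else 0) - Rc s rs a h gsel j"
    using on_sequence
    by (simp add: fdm_pay_def Let_def C_def[symmetric] w_def[symmetric] j_def[symmetric])
  have le: "vfirst a (Nminus s rs a {i}) \<le> vfirst a (Nminus s rs a (Kset s rs a h j))"
    using Nminus_sca_seq_subset_Kset[of h j] j(2)
    by (intro vfirst_mono[OF finite_subset]) (auto simp: C_def Nminus_def finite_part)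
  have reward: "0 \<le> Rc s rs a h gsel j" using gsel by (rule Rc_nonneg)
  show ?thesis
  proof (cases "j < w")
    case True
    have "0 \<le> fdm_alloc s rs a h i * bid a i" using bid by (simp add: fdm_alloc_def)
    with True pay le reward show ?thesis by simp
  next
    case False
    with j(1) have "j = w" by simp
    with fdm_win_spec[OF h] j
    have "fdm_alloc s rs a h i = 1" "bid a i = vfirst a (Nminus s rs a (Kset s rs a h j))"
      by (simp_all add: fdm_alloc_def C_def w_def)
    with pay le reward False show ?thesis by simp
  qed
qed

end

theorem theorem1:
  fixes N :: "'a set" and s :: 'a and rs :: "'a set"
    and v :: "'a \<Rightarrow> real" and r :: "'a \<Rightarrow> 'a set"
    and a :: "'a profile" and i :: 'a and ri' :: "'a set"
    and h :: 'a and gsel :: "'a set \<Rightarrow> 'a"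
  assumes "finite N" and "s \<notin> N" and "rs \<subseteq> N"
    and "\<forall>j \<in> N. r j \<subseteq> N \<union> {s} \<and> j \<notin> r j"
    and "\<forall>j \<in> N. \<forall>k \<in> N. k \<in> r j \<longleftrightarrow> j \<in> r k"
    and "\<forall>j \<in> N. j \<in> rs \<longleftrightarrow> s \<in> r j"
    and "\<forall>j \<in> N. v j \<ge> 0"
    and "feasible N s rs r a"
    and "i \<in> N" and "a i = Some (v i, ri')"
    and "valid_h a h" and "valid_gsel s rs a gsel"
  shows "fdm_alloc s rs a h i * v i - fdm_pay s rs a h gsel i \<ge> 0"
proof -
  have part_N: "part a \<subseteq> N" using assms(8) by (auto simp: feasible_def part_def)
  interpret reported_network s rs a
  proof
    show "\<forall>i \<in> part a. (s, i) \<in> (redge s rs a)\<^sup>+" using assms(8) by (simp add: feasible_def)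
    show "s \<notin> part a" using part_N assms(2) by blast
    show "finite (part a)" using part_N assms(1) by (rule finite_subset)
  qed
  have "0 \<le> bid a h"
    using assms(8,11) by (auto simp: feasible_def valid_h_def part_def bid_def)
  have truthful: "bid a i = v i" using assms(10) by (simp add: bid_def)
  with assms(7,9) have "0 \<le> bid a i" by simp
  show ?thesis
  proof (cases "\<exists>j \<le> fdm_win s rs a h. sca_seq s rs a h ! j = i")
    case True
    from fdm_utility_nonneg_on_sequence[OF assms(11) \<open>0 \<le> bid a h\<close> assms(12) \<open>0 \<le> bid a i\<close> True]
    show ?thesis by (simp add: truthful)
  next
    case False
    then have "fdm_pay s rs a h gsel i \<le> 0" by (rule fdm_pay_nonpos_off_sequence)
    moreover have "0 \<le> fdm_alloc s rs a h i * v i" using assms(7,9) by (simp add: fdm_alloc_def)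
    ultimately show ?thesis by simp
  qed
qed

end
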